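(* Let $r_1<r_2$ be positive rational numbers such that neither $r_1$ nor $r_2$ is an integer and the open interval $(r_1,r_2)$ contains no integer. Let $w:=\lfloor r_1\rfloor$, $\epsilon_1:=r_1-w$, $\epsilon_2:=r_2-w$ (so $0<\epsilon_1<\epsilon_2<1$). Let $$d^*:=\min\{d\in\mathbb{Z}_{\ge1}:\ \exists m\in\mathbb{Z},\ r_1<m/d<r_2\},\qquad d_1:=\min\{e\in\mathbb{Z}_{\ge1}:\ (e/\epsilon_2,\,e/\epsilon_1)\cap\mathbb{Z}\neq\emptyset\}.$$ Then both minima exist, $d_1$ is the smallest positive integer denominator of a rational number in the interval $(1/\epsilon_2,1/\epsilon_1)$, and $$d^*=\left\lfloor \frac{d_1}{\epsilon_2}\right\rfloor+1,$$ i.e. $d^*=\lceil d_1/\epsilon_2\rceil$ if $d_1/\epsilon_2\notin\mathbb{Z}$ and $d^*=d_1/\epsilon_2+1$ if $d_1/\epsilon_2\in\mathbb{Z}$. *)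

theory Defs
  imports Complex_Main
begin

definition dstar :: "rat \<Rightarrow> rat \<Rightarrow> nat" where
  "dstar r1 r2 = (LEAST d::nat. d \<ge> 1 \<and>
      (\<exists>m::int. r1 < of_int m / of_nat d \<and> of_int m / of_nat d < r2))"

definition dfirst :: "rat \<Rightarrow> rat \<Rightarrow> nat" where
  "dfirst eps1 eps2 = (LEAST e::nat. e \<ge> 1 \<and>
      (\<exists>n::int. of_nat e / eps2 < of_int n \<and> of_int n < of_nat e / eps1))"

end

theory Submission
  imports Defs
begin

text \<open>
  Subtracting the integer w = \<lfloor>r1\<rfloor> does not change which denominators d admit a fraction
  m/d in (r1, r2), so d* is the least d \<ge> 1 for which (d, m) lies strictly inside the cone
  eps1 d < m < eps2 d for some m, while d_1 is the least m occurring in such a point.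
  Every point (d, m) of the cone has d_1 \<le> m < eps2 d, whence d* > d_1/eps2. Conversely,
  if (n, d_1) is in the cone then n > d_1/eps2, so d = \<lfloor>d_1/eps2\<rfloor> + 1 \<le> n and (d, d_1)
  is in the cone too, whence d* \<le> d. Read as fractions m/d, the cone consists of the rationals
  between 1/eps2 and 1/eps1, and d_1 is the least denominator of such a rational.
\<close>

definition int_between :: "'a::floor_ceiling \<Rightarrow> 'a \<Rightarrow> bool" where
  "int_between x y \<longleftrightarrow> (\<exists>m::int. x < of_int m \<and> of_int m < y)"

lemma int_between_add_of_int:
  "int_between (x + of_int k) (y + of_int k) \<longleftrightarrow> int_between x y"
proof
  assume "int_between (x + of_int k) (y + of_int k)"
  then obtain m where "x + of_int k < of_int m" "of_int m < y + of_int k"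
    unfolding int_between_def by blast
  then have "x < of_int (m - k) \<and> of_int (m - k) < y" by simp
  then show "int_between x y" unfolding int_between_def by blast
next
  assume "int_between x y"
  then obtain m where "x < of_int m" "of_int m < y"
    unfolding int_between_def by blast
  then have "x + of_int k < of_int (m + k) \<and> of_int (m + k) < y + of_int k" by simp
  then show "int_between (x + of_int k) (y + of_int k)" unfolding int_between_def by blast
qed

lemma ex_int_divide_between_iff:
  fixes x y c :: "'a::floor_ceiling"
  assumes "0 < c"
  shows "(\<exists>m::int. x < of_int m / c \<and> of_int m / c < y) \<longleftrightarrow> int_between (x * c) (y * c)"
  using assms by (simp add: int_between_def pos_less_divide_eq pos_divide_less_eq)

lemma ex_fraction_between_iff_shifted:
  fixes x y :: "'a::floor_ceiling"
  assumes "d \<ge> 1"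
  shows "(\<exists>m::int. x < of_int m / of_nat d \<and> of_int m / of_nat d < y) \<longleftrightarrow>
    int_between ((x - of_int w) * of_nat d) ((y - of_int w) * of_nat d)"
  using assms int_between_add_of_int[of "(x - of_int w) * of_nat d" "w * int d"
      "(y - of_int w) * of_nat d"]
  by (simp add: ex_int_divide_between_iff algebra_simps)

lemma int_between_divide_iff:
  fixes a b e :: "'a::floor_ceiling"
  assumes "0 < a" "0 < b"
  shows "int_between (e / b) (e / a) \<longleftrightarrow> (\<exists>n::int. a * of_int n < e \<and> e < b * of_int n)"
  using assms by (auto simp: int_between_def pos_less_divide_eq pos_divide_less_eq mult.commute)

lemma ex_int_between_multiples:
  fixes a b :: "'a::floor_ceiling"
  assumes "a < b"
  shows "\<exists>d::nat. d \<ge> 1 \<and> int_between (a * of_nat d) (b * of_nat d)"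
proof -
  obtain d :: nat where d: "1 / (b - a) < of_nat d"
    using reals_Archimedean2 by blast
  have gap: "1 < (b - a) * of_nat d" using d assms by (simp add: field_simps)
  then have "0 < d" by (cases d) auto
  define m where "m = \<lfloor>a * of_nat d\<rfloor> + 1"
  have "a * of_nat d < of_int m" "of_int m \<le> a * of_nat d + 1"
    unfolding m_def using floor_correct[of "a * of_nat d"] by simp_all
  with gap have "int_between (a * of_nat d) (b * of_nat d)"
    unfolding int_between_def by (intro exI[of _ m]) (auto simp: algebra_simps)
  with \<open>0 < d\<close> show ?thesis by (intro exI[of _ d]) simp
qed

lemma numerator_below_denominator:
  fixes a b :: "'a::floor_ceiling"
  assumes "0 < a" "0 < b" "d \<ge> 1" "int_between (a * of_nat d) (b * of_nat d)"
  obtains e :: nat where "e \<ge> 1" "int_between (of_nat e / b) (of_nat e / a)"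
    "of_nat e < b * of_nat d"
proof -
  obtain m :: int where m: "a * of_nat d < of_int m" "of_int m < b * of_nat d"
    using assms(4) unfolding int_between_def by blast
  have "0 < a * of_nat d" using assms by simp
  then have "(0::'a) < of_int m" using m(1) by linarith
  then have "m \<ge> 1" by simp
  then have m_nat: "of_nat (nat m) = (of_int m :: 'a)" by simp
  have "int_between (of_nat (nat m) / b) (of_nat (nat m) / a)"
    unfolding int_between_divide_iff[OF assms(1,2)] m_nat
    using m by (intro exI[of _ "int d"]) (simp add: mult.commute)
  with \<open>m \<ge> 1\<close> m(2) m_nat show ?thesis by (intro that[of "nat m"]) simp_all
qed

lemma denominator_from_numerator:
  fixes a b :: "'a::floor_ceiling"
  assumes "0 < a" "0 < b" "int_between (of_nat e / b) (of_nat e / a)"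
  defines "d \<equiv> nat (\<lfloor>of_nat e / b\<rfloor> + 1)"
  shows "d \<ge> 1" "int_between (a * of_nat d) (b * of_nat d)"
proof -
  obtain n :: int where n: "of_nat e / b < of_int n" "a * of_int n < of_nat e"
    using assms(3) \<open>0 < a\<close> unfolding int_between_def by (auto simp: pos_less_divide_eq mult.commute)
  have "0 \<le> \<lfloor>of_nat e / b\<rfloor>" using \<open>0 < b\<close> by simp
  then show "d \<ge> 1" unfolding d_def by (simp add: le_nat_iff)
  have d_int: "of_nat d = (of_int (\<lfloor>of_nat e / b\<rfloor> + 1) :: 'a)"
    unfolding d_def using \<open>0 \<le> \<lfloor>of_nat e / b\<rfloor>\<close> by simp
  have "of_nat e / b < of_nat d" unfolding d_int using floor_correct[of "of_nat e / b"] by simp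
  then have upper: "of_nat e < b * of_nat d" using \<open>0 < b\<close> by (simp add: pos_divide_less_eq mult.commute)
  have "\<lfloor>of_nat e / b\<rfloor> < n" using n(1) by (simp only: floor_less_iff)
  then have "\<lfloor>of_nat e / b\<rfloor> + 1 \<le> n" by simp
  then have "(of_nat d :: 'a) \<le> of_int n" unfolding d_int by (simp only: of_int_le_iff)
  then have "a * of_nat d \<le> a * of_int n" using \<open>0 < a\<close> by simp
  then have "a * of_nat d < of_nat e" using n(2) by linarith
  with upper show "int_between (a * of_nat d) (b * of_nat d)"
    unfolding int_between_def by (intro exI[of _ "int e"]) simp
qed

lemma ex_numerator_int_between:
  fixes a b :: "'a::floor_ceiling"
  assumes "0 < a" "a < b"
  shows "\<exists>e::nat. e \<ge> 1 \<and> int_between (of_nat e / b) (of_nat e / a)"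
proof -
  obtain d :: nat where "d \<ge> 1" "int_between (a * of_nat d) (b * of_nat d)"
    using ex_int_between_multiples[OF assms(2)] by blast
  moreover have "0 < b" using assms by simp
  ultimately show ?thesis using numerator_below_denominator[OF \<open>0 < a\<close>] by metis
qed

theorem least_denominator_eq_floor:
  fixes a b :: "'a::floor_ceiling"
  assumes "0 < a" "a < b"
  defines "D \<equiv> LEAST d::nat. d \<ge> 1 \<and> int_between (a * of_nat d) (b * of_nat d)"
    and "E \<equiv> LEAST e::nat. e \<ge> 1 \<and> int_between (of_nat e / b) (of_nat e / a)"
  shows "int D = \<lfloor>of_nat E / b\<rfloor> + 1"
proof -
  have "0 < b" using assms by simp
  have D: "D \<ge> 1" "int_between (a * of_nat D) (b * of_nat D)"
    using LeastI_ex[OF ex_int_between_multiples[OF assms(2)]] unfolding D_def by blast+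
  have E: "E \<ge> 1" "int_between (of_nat E / b) (of_nat E / a)"
    using LeastI_ex[OF ex_numerator_int_between[OF assms(1,2)]] unfolding E_def by blast+
  obtain e :: nat where e: "e \<ge> 1" "int_between (of_nat e / b) (of_nat e / a)"
    "of_nat e < b * of_nat D"
    using numerator_below_denominator[OF \<open>0 < a\<close> \<open>0 < b\<close> D] .
  have "E \<le> e" unfolding E_def using e(1,2) by (rule Least_le[OF conjI])
  then have "(of_nat E :: 'a) \<le> of_nat e" by simp
  then have "of_nat E < b * of_nat D" using e(3) by linarith
  then have "of_nat E / b < of_nat D" using \<open>0 < b\<close> by (simp add: pos_divide_less_eq mult.commute)
  then have "\<lfloor>of_nat E / b\<rfloor> < int D" by (simp add: floor_less_iff)
  then have lower: "\<lfloor>of_nat E / b\<rfloor> + 1 \<le> int D" by simp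
  let ?d = "nat (\<lfloor>of_nat E / b\<rfloor> + 1)"
  have "D \<le> ?d" unfolding D_def
    using denominator_from_numerator[OF \<open>0 < a\<close> \<open>0 < b\<close> E(2)] by (rule Least_le[OF conjI])
  then have "int D \<le> int ?d" by (simp only: of_nat_le_iff)
  also have "int ?d = \<lfloor>of_nat E / b\<rfloor> + 1" using \<open>0 < b\<close> by simp
  finally show ?thesis using lower by simp
qed

lemma quotient_of_denom_dvd:
  assumes "quotient_of (of_int n / of_int e) = (p, k)" "e > 0"
  shows "k dvd e"
proof -
  have "of_int p / of_int k = (of_int n / of_int e :: rat)"
    using quotient_of_div[OF assms(1)] by simp
  then have "p * e = n * k"
    using quotient_of_denom_pos[OF assms(1)] assms(2) by (simp add: field_simps flip: of_int_mult)
  then have "k dvd p * e" by simp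
  then show ?thesis
    using quotient_of_coprime[OF assms(1)] by (simp add: coprime_commute coprime_dvd_mult_right_iff)
qed

lemma least_denominator_in_interval:
  fixes a b :: rat
  assumes "0 < a" "a < b"
  shows "int (LEAST e::nat. e \<ge> 1 \<and> int_between (of_nat e / b) (of_nat e / a)) =
    (LEAST k::int. \<exists>q. 1 / b < q \<and> q < 1 / a \<and> k = snd (quotient_of q))"
proof -
  have "0 < b" using assms by simp
  define E where "E = (LEAST e::nat. e \<ge> 1 \<and> int_between (of_nat e / b) (of_nat e / a))"
  have interval_iff: "1 / b < of_int p / of_int k \<and> of_int p / of_int k < 1 / a \<longleftrightarrow>
      of_int k / b < of_int p \<and> of_int p < of_int k / a" if "k > 0" for p k :: int
    using that \<open>0 < a\<close> \<open>0 < b\<close> by (simp add: field_simps)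
  have E_le: "int E \<le> k" if q: "1 / b < q" "q < 1 / a" and k: "k = snd (quotient_of q)" for q k
  proof -
    obtain p where pk: "quotient_of q = (p, k)" using k by (metis prod.collapse)
    have "k > 0" using quotient_of_denom_pos[OF pk] .
    have "of_int k / b < of_int p \<and> of_int p < of_int k / a"
      using interval_iff[OF \<open>k > 0\<close>] q unfolding quotient_of_div[OF pk] by blast
    moreover have "(of_nat (nat k) :: rat) = of_int k" using \<open>k > 0\<close> by simp
    ultimately have "int_between (of_nat (nat k) / b) (of_nat (nat k) / a)"
      unfolding int_between_def by metis
    then have "E \<le> nat k" unfolding E_def using \<open>k > 0\<close> by (intro Least_le) simp
    then show ?thesis using \<open>k > 0\<close> by linarith
  qed
  have E: "E \<ge> 1" "int_between (of_nat E / b) (of_nat E / a)"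
    using LeastI_ex[OF ex_numerator_int_between[OF assms]] unfolding E_def by blast+
  then obtain n :: int where n: "of_nat E / b < of_int n" "of_int n < of_nat E / a"
    unfolding int_between_def by blast
  have "int E > 0" using E(1) by simp
  define q :: rat where "q = of_int n / of_int (int E)"
  obtain p k where pk: "quotient_of q = (p, k)" by (metis prod.collapse)
  have q: "1 / b < q \<and> q < 1 / a"
    using interval_iff[OF \<open>int E > 0\<close>, of n] n unfolding q_def of_int_of_nat_eq by blast
  have "k dvd int E" using quotient_of_denom_dvd[OF pk[unfolded q_def] \<open>int E > 0\<close>] .
  then have "k \<le> int E" using \<open>int E > 0\<close> by (rule zdvd_imp_le)
  moreover have "int E \<le> k" using E_le[of q k] q pk by simp
  ultimately have "snd (quotient_of q) = int E" using pk by simp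
  with q have "\<exists>q. 1 / b < q \<and> q < 1 / a \<and> int E = snd (quotient_of q)" by auto
  then show ?thesis unfolding E_def[symmetric] by (rule Least_equality[symmetric]) (use E_le in blast)
qed

theorem mainTheorem5:
  fixes r1 r2 :: rat
  assumes "0 < r1" and "r1 < r2"
    and "r1 \<notin> \<int>" and "r2 \<notin> \<int>"
    and "\<forall>k::int. \<not> (r1 < of_int k \<and> of_int k < r2)"
  defines "w \<equiv> \<lfloor>r1\<rfloor>"
  defines "eps1 \<equiv> r1 - of_int w"
  defines "eps2 \<equiv> r2 - of_int w"
  shows "0 < eps1 \<and> eps1 < eps2 \<and> eps2 < 1
    \<and> (\<exists>d::nat. d \<ge> 1 \<and> (\<exists>m::int. r1 < of_int m / of_nat d \<and> of_int m / of_nat d < r2))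
    \<and> (\<exists>e::nat. e \<ge> 1 \<and> (\<exists>n::int. of_nat e / eps2 < of_int n \<and> of_int n < of_nat e / eps1))
    \<and> int (dfirst eps1 eps2) = (LEAST k::int. \<exists>q::rat. 1 / eps2 < q \<and> q < 1 / eps1
                                            \<and> k = snd (quotient_of q))
    \<and> int (dstar r1 r2) = \<lfloor>of_nat (dfirst eps1 eps2) / eps2\<rfloor> + 1
    \<and> (of_nat (dfirst eps1 eps2) / eps2 \<notin> \<int> \<longrightarrow>
         int (dstar r1 r2) = \<lceil>of_nat (dfirst eps1 eps2) / eps2\<rceil>)
    \<and> (of_nat (dfirst eps1 eps2) / eps2 \<in> \<int> \<longrightarrow>
         of_nat (dstar r1 r2) = of_nat (dfirst eps1 eps2) / eps2 + 1)"
proof -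
  have "0 < eps1" using assms(3) unfolding eps1_def w_def by (simp flip: frac_def)
  have "eps1 < eps2" using assms(2) unfolding eps1_def eps2_def by simp
  have "r2 \<le> of_int (w + 1)"
    using assms(5) floor_correct[of r1] unfolding w_def by (metis not_le)
  moreover have "r2 \<noteq> of_int (w + 1)" using assms(4) by (metis Ints_of_int)
  ultimately have "eps2 < 1" unfolding eps2_def by simp
  have fraction_iff: "(\<exists>m::int. r1 < of_int m / of_nat d \<and> of_int m / of_nat d < r2) \<longleftrightarrow>
      int_between (eps1 * of_nat d) (eps2 * of_nat d)" if "d \<ge> 1" for d :: nat
    unfolding eps1_def eps2_def using that by (rule ex_fraction_between_iff_shifted)
  have dstar_eq: "dstar r1 r2 = (LEAST d::nat. d \<ge> 1 \<and> int_between (eps1 * of_nat d) (eps2 * of_nat d))"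
    unfolding dstar_def by (intro arg_cong[where f = Least] ext) (use fraction_iff in blast)
  have dfirst_eq: "dfirst eps1 eps2 = (LEAST e::nat. e \<ge> 1 \<and> int_between (of_nat e / eps2) (of_nat e / eps1))"
    unfolding dfirst_def int_between_def ..
  define x where "x = of_nat (dfirst eps1 eps2) / eps2"
  have dstar_floor: "int (dstar r1 r2) = \<lfloor>x\<rfloor> + 1"
    unfolding x_def dstar_eq dfirst_eq using \<open>0 < eps1\<close> \<open>eps1 < eps2\<close>
    by (rule least_denominator_eq_floor)
  have "x \<notin> \<int> \<longrightarrow> int (dstar r1 r2) = \<lceil>x\<rceil>"
  proof
    assume "x \<notin> \<int>"
    then have "x \<noteq> of_int \<lfloor>x\<rfloor>" by (metis Ints_of_int)
    then show "int (dstar r1 r2) = \<lceil>x\<rceil>" using dstar_floor by (simp add: ceiling_altdef)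
  qed
  moreover have "x \<in> \<int> \<longrightarrow> of_nat (dstar r1 r2) = x + 1"
  proof
    assume "x \<in> \<int>"
    then obtain z where "x = of_int z" by (elim Ints_cases)
    with dstar_floor have "int (dstar r1 r2) = z + 1" by simp
    then have "of_int (int (dstar r1 r2)) = x + 1" using \<open>x = of_int z\<close> by simp
    then show "of_nat (dstar r1 r2) = x + 1" by (simp only: of_int_of_nat_eq)
  qed
  moreover have "\<exists>d::nat. d \<ge> 1 \<and> (\<exists>m::int. r1 < of_int m / of_nat d \<and> of_int m / of_nat d < r2)"
    using ex_int_between_multiples[OF \<open>eps1 < eps2\<close>] fraction_iff by blast
  moreover have "\<exists>e::nat. e \<ge> 1 \<and> (\<exists>n::int. of_nat e / eps2 < of_int n \<and> of_int n < of_nat e / eps1)"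
    using ex_numerator_int_between[OF \<open>0 < eps1\<close> \<open>eps1 < eps2\<close>] unfolding int_between_def .
  moreover have "int (dfirst eps1 eps2) = (LEAST k::int. \<exists>q::rat. 1 / eps2 < q \<and> q < 1 / eps1
                                            \<and> k = snd (quotient_of q))"
    unfolding dfirst_eq using \<open>0 < eps1\<close> \<open>eps1 < eps2\<close> by (rule least_denominator_in_interval)
  ultimately show ?thesis
    using \<open>0 < eps1\<close> \<open>eps1 < eps2\<close> \<open>eps2 < 1\<close> dstar_floor unfolding x_def
    by (intro conjI) assumption+
qed

end
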